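(* Let $S_X,S_Y$ be finite nonempty action sets and $\varphi:S_X\times S_Y\to\mathbb{R}$. Suppose $\sigma_X:\mathcal{H}\to\Delta(S_X)$ is a $(\varphi,1)$-autocratic behavioral strategy for $X$ of arbitrary memory. Then there exists a two-point reactive learning strategy for $X$ that is also $(\varphi,1)$-autocratic.
   Context: Two players $X,Y$ play a repeated game with finite action sets $S_X,S_Y$; $\Delta(S)$ denotes the probability distributions on $S$. $\varphi$ is extended to mixed actions in its first argument by $\varphi(\tau_X,s_Y)=\mathbb{E}_{s_X\sim\tau_X}[\varphi(s_X,s_Y)]$. Histories: $\mathcal{H}=\bigcup_{T\ge0}(S_X\times S_Y)^T$. A behavioral strategy for $X$ is a map $\sigma_X:\mathcal{H}\to\Delta(S_X)$, similarly for $Y$; in each round $t$ players independently draw actions from their strategies evaluated at the history of realized action pairs of rounds $0,\dots,t-1$, and $\mathbb{E}_{\sigma_X,\sigma_Y}$ is the expectation over the resulting play. $\sigma_X$ is $(\varphi,1)$-autocratic if for every behavioral strategy $\sigma_Y$ of $Y$ the Cesàro limit $\lim_{T\to\infty}\frac{1}{T+1}\sum_{t=0}^T\mathbb{E}_{\sigma_X,\sigma_Y}[\varphi(s_X^t,s_Y^t)]$ exists and equals $0$. A reactive learning strategy for $X$ is a pair $(\sigma_X^0,\sigma_X^* )$ with $\sigma_X^0\in\Delta(S_X)$ and $\sigma_X^*:\Delta(S_X)\times S_Y\to\Delta(S_X)$, played by using $\tau_X^0=\sigma_X^0$ in round $0$ and $\tau_X^{t+1}=\sigma_X^*[\tau_X^t,s_Y^t]$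 in round $t+1$, where $s_Y^t$ is $Y$'s realized action in round $t$. It is two-point if there exist $\tau_X^\pm\in\Delta(S_X)$, $p_0\in[0,1]$, $p^*:[0,1]\times S_Y\to[0,1]$ with $\sigma_X^0=p_0\tau_X^++(1-p_0)\tau_X^-$ and $\sigma_X^*[p\tau_X^++(1-p)\tau_X^-,s_Y]=p^*[p,s_Y]\tau_X^++(1-p^*[p,s_Y])\tau_X^-$ for all $p\in[0,1]$, $s_Y\in S_Y$. *)

theory Defs
  imports "HOL-Probability.Probability"
begin

text \<open>Histories: lists of realized action pairs, element t = round t.\<close>
type_synonym ('x, 'y) hist = "('x \<times> 'y) list"

type_synonym ('x, 'y) bstrat = "('x, 'y) hist \<Rightarrow> 'x pmf"

fun play :: "('x, 'y) bstrat \<Rightarrow> ('y, 'x) bstrat \<Rightarrow> nat \<Rightarrow> ('x, 'y) hist pmf" where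
  "play \<sigma>X \<sigma>Y 0 = return_pmf []"
| "play \<sigma>X \<sigma>Y (Suc t) =
     bind_pmf (play \<sigma>X \<sigma>Y t)
       (\<lambda>h. map_pmf (\<lambda>a. h @ [a])
              (pair_pmf (\<sigma>X h) (\<sigma>Y (map (\<lambda>(x, y). (y, x)) h))))"

definition stage_payoff ::
  "('x \<Rightarrow> 'y \<Rightarrow> real) \<Rightarrow> ('x, 'y) bstrat \<Rightarrow> ('y, 'x) bstrat \<Rightarrow> nat \<Rightarrow> real" where
  "stage_payoff \<phi> \<sigma>X \<sigma>Y t =
     measure_pmf.expectation (play \<sigma>X \<sigma>Y (Suc t)) (\<lambda>h. \<phi> (fst (h ! t)) (snd (h ! t)))"

definition autocratic :: "('x \<Rightarrow> 'y \<Rightarrow> real) \<Rightarrow> ('x, 'y) bstrat \<Rightarrow> bool" where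
  "autocratic \<phi> \<sigma>X \<longleftrightarrow>
     (\<forall>\<sigma>Y :: ('y, 'x) bstrat.
        (\<lambda>T. (\<Sum>t\<le>T. stage_payoff \<phi> \<sigma>X \<sigma>Y t) / real (T + 1)) \<longlonglongrightarrow> 0)"

definition reactive_strategy ::
  "'x pmf \<Rightarrow> ('x pmf \<Rightarrow> 'y \<Rightarrow> 'x pmf) \<Rightarrow> ('x, 'y) bstrat" where
  "reactive_strategy \<sigma>0 \<sigma>s h = foldl (\<lambda>\<tau> a. \<sigma>s \<tau> (snd a)) \<sigma>0 h"

definition mix :: "real \<Rightarrow> 'x pmf \<Rightarrow> 'x pmf \<Rightarrow> 'x pmf" where
  "mix p a b = bind_pmf (bernoulli_pmf p) (\<lambda>c. if c then a else b)"

definition two_point :: "'x pmf \<Rightarrow> ('x pmf \<Rightarrow> 'y \<Rightarrow> 'x pmf) \<Rightarrow> bool" where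
  "two_point \<sigma>0 \<sigma>s \<longleftrightarrow>
     (\<exists>\<tau>p \<tau>m p0 (pstar :: real \<Rightarrow> 'y \<Rightarrow> real).
        p0 \<in> {0..1} \<and>
        (\<forall>p\<in>{0..1}. \<forall>s. pstar p s \<in> {0..1}) \<and>
        \<sigma>0 = mix p0 \<tau>p \<tau>m \<and>
        (\<forall>p\<in>{0..1}. \<forall>s. \<sigma>s (mix p \<tau>p \<tau>m) s = mix (pstar p s) \<tau>p \<tau>m))"

end

(*
  Suppose X can force the mean payoff to 0. If X had no mixed action tau+ with phi(tau+, y) >= 0
  for all y, the separating hyperplane theorem would give a mixed action of Y against which every
  action of X has negative payoff, and Y playing it forever would keep the Cesaro means below a
  negative constant. Hence tau+ exists, and dually tau- with phi(tau-, y) <= 0 for all y.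

  X now plays p tau+ + (1 - p) tau- and, after Y plays y, updates p to p - eta phi(p tau+ +
  (1 - p) tau-, y), with eta > 0 small enough to keep p in [0, 1]. Then the weight p is a bounded
  potential whose expectation decreases in every round by exactly eta times the expected stage
  payoff, so the partial sums of expected payoffs stay bounded and their Cesaro means tend to 0.
*)
theory Submission
  imports Defs
begin

lemma expectation_finite_pmf:
  fixes p :: "'a::finite pmf"
  shows "measure_pmf.expectation p f = (\<Sum>x\<in>UNIV. pmf p x * f x)"
  by (subst integral_measure_pmf_real[where A = UNIV]) (auto simp: mult.commute)

lemma expectation_pair_pmf_finite:
  fixes p :: "'a::finite pmf" and q :: "'b::finite pmf"
  shows "measure_pmf.expectation (pair_pmf p q) f =
    (\<Sum>x\<in>UNIV. \<Sum>y\<in>UNIV. pmf p x * pmf q y * f (x, y))"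
  by (simp add: expectation_finite_pmf pmf_pair sum.cartesian_product' flip: UNIV_Times_UNIV)

lemma pmf_embed_pmf_finite:
  fixes w :: "'a::finite \<Rightarrow> real"
  assumes "\<And>x. 0 \<le> w x" "sum w UNIV = 1"
  shows "pmf (embed_pmf w) x = w x"
  using assms by (intro pmf_embed_pmf) (simp_all add: nn_integral_count_space_finite)

lemma pmf_mix:
  assumes "p \<in> {0..1}"
  shows "pmf (mix p A B) x = p * pmf A x + (1 - p) * pmf B x"
  using assms unfolding mix_def pmf_bind by (simp add: expectation_finite_pmf UNIV_bool)

lemma sum_pmf_mix:
  fixes A B :: "'a::finite pmf"
  assumes "p \<in> {0..1}"
  shows "(\<Sum>x\<in>UNIV. pmf (mix p A B) x * f x) =
    p * (\<Sum>x\<in>UNIV. pmf A x * f x) + (1 - p) * (\<Sum>x\<in>UNIV. pmf B x * f x)"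
  using assms by (simp add: pmf_mix distrib_right sum.distrib sum_distrib_left mult.assoc)

lemma mix_self: "mix p A A = A"
  unfolding mix_def by (simp only: if_cancel bind_pmf_const)

lemma mix_inject:
  assumes "p \<in> {0..1}" "q \<in> {0..1}" "A \<noteq> B"
  shows "mix p A B = mix q A B \<longleftrightarrow> p = q"
proof
  assume eq: "mix p A B = mix q A B"
  obtain x where x: "pmf A x \<noteq> pmf B x"
    using assms(3) by (meson pmf_eqI)
  have "p * pmf A x + (1 - p) * pmf B x = q * pmf A x + (1 - q) * pmf B x"
    using arg_cong[OF eq, of "\<lambda>\<tau>. pmf \<tau> x"] assms(1,2) by (simp add: pmf_mix)
  then have "(p - q) * (pmf A x - pmf B x) = 0"
    by (simp add: algebra_simps)
  with x show "p = q" by simp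
qed simp

lemma counter_strategy_if_no_guarantee:
  fixes \<phi> :: "'x::finite \<Rightarrow> 'y::finite \<Rightarrow> real"
  assumes no_guarantee: "\<And>\<tau>::'x pmf. \<exists>y. (\<Sum>x\<in>UNIV. pmf \<tau> x * \<phi> x y) < 0"
  shows "\<exists>\<rho>::'y pmf. \<forall>x. (\<Sum>y\<in>UNIV. pmf \<rho> y * \<phi> x y) < 0"
proof -
  \<comment> \<open>Separate the hull of the rows of \<phi> from the nonnegative orthant; the normalised
    normal vector of the separating hyperplane is the counter-strategy.\<close>
  define row where "row x = (\<chi> y. \<phi> x y)" for x
  define S where "S = convex hull (range row)"
  define T where "T = {v::real^'y. \<forall>y. 0 \<le> v $ y}"
  have S_eq: "S = {\<Sum>x\<in>UNIV. c x *\<^sub>R row x | c. (\<forall>x. 0 \<le> c x) \<and> sum c UNIV = 1}"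
  proof -
    have "range row = (\<Union>x. {row x})" by blast
    then show ?thesis
      using convex_hull_finite_union[of UNIV "\<lambda>x. {row x}"] by (simp add: S_def flip: fun_eq_iff)
  qed
  have neg: "\<exists>y. v $ y < 0" if "v \<in> S" for v
  proof -
    obtain c where c: "\<forall>x. 0 \<le> c x" "sum c UNIV = 1" and v: "v = (\<Sum>x\<in>UNIV. c x *\<^sub>R row x)"
      using \<open>v \<in> S\<close> unfolding S_eq by blast
    show ?thesis
      using no_guarantee[of "embed_pmf c"] c by (simp add: v pmf_embed_pmf_finite row_def mult.commute)
  qed
  have disjoint: "S \<inter> T = {}"
  proof -
    have "v \<notin> T" if "v \<in> S" for v
      using neg[OF that] by (auto simp: T_def not_le)
    then show ?thesis by blast
  qed
  have "compact S" "convex S" "S \<noteq> {}"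
    by (simp_all add: S_def finite_imp_compact_convex_hull)
  moreover have "convex T"
    unfolding T_def convex_def by auto
  moreover have "closed T"
  proof -
    have "T = (\<Inter>y. {v. 0 \<le> v $ y})" unfolding T_def by auto
    also have "closed \<dots>"
      by (intro closed_INT ballI closed_Collect_le continuous_intros)
    finally show ?thesis .
  qed
  ultimately obtain a b where below: "\<forall>v\<in>S. a \<bullet> v < b" and above: "\<forall>u\<in>T. b < a \<bullet> u"
    using separating_hyperplane_compact_closed[OF _ _ _ _ _ disjoint] by blast
  have "0 \<in> T"
    by (simp add: T_def)
  with above have "b < 0"
    by fastforce
  have a_nonneg: "0 \<le> a $ y" for y
  proof (rule ccontr)
    assume "\<not> 0 \<le> a $ y"
    then have "axis y ((b - 1) / a $ y) \<in> T"
      using \<open>b < 0\<close> by (simp add: T_def axis_def divide_nonpos_neg)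
    with above have "b < b - 1"
      using \<open>\<not> 0 \<le> a $ y\<close> by (fastforce simp: inner_axis)
    then show False by simp
  qed
  have row_below: "(\<Sum>y\<in>UNIV. a $ y * \<phi> x y) < b" for x
  proof -
    have "row x \<in> S"
      unfolding S_def by (rule hull_inc) simp
    with below show ?thesis
      by (auto simp: inner_vec_def row_def)
  qed
  define s where "s = (\<Sum>y\<in>UNIV. a $ y)"
  have "s > 0"
  proof (rule ccontr)
    assume "\<not> s > 0"
    then have "\<forall>y. a $ y = 0"
      using a_nonneg sum_nonneg_eq_0_iff[of UNIV "\<lambda>y. a $ y"] by (simp add: s_def order.antisym sum_nonneg)
    then show False
      using row_below \<open>b < 0\<close> by simp
  qed
  define \<rho> :: "'y pmf" where "\<rho> = embed_pmf (\<lambda>y. a $ y / s)"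
  have "(\<Sum>y\<in>UNIV. pmf \<rho> y * \<phi> x y) = (\<Sum>y\<in>UNIV. a $ y * \<phi> x y) / s" for x
    using \<open>s > 0\<close> a_nonneg
    by (simp add: \<rho>_def pmf_embed_pmf_finite s_def sum_divide_distrib[symmetric])
  then have "\<forall>x. (\<Sum>y\<in>UNIV. pmf \<rho> y * \<phi> x y) < 0"
    using row_below \<open>b < 0\<close> \<open>s > 0\<close> by (smt (verit) divide_neg_pos)
  then show ?thesis ..
qed


lemma length_play:
  "h \<in> set_pmf (play \<sigma>X \<sigma>Y t) \<Longrightarrow> length h = t"
  by (induction t arbitrary: h) auto

lemma finite_set_pmf_play:
  fixes \<sigma>X :: "('x::finite, 'y::finite) bstrat"
  shows "finite (set_pmf (play \<sigma>X \<sigma>Y t))"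
  by (rule finite_subset[OF _ finite_lists_length_eq[of UNIV t]]) (auto simp: length_play)

lemma expectation_play_Suc:
  fixes \<sigma>X :: "('x::finite, 'y::finite) bstrat"
  shows "measure_pmf.expectation (play \<sigma>X \<sigma>Y (Suc t)) F =
    measure_pmf.expectation (play \<sigma>X \<sigma>Y t) (\<lambda>h. \<Sum>x\<in>UNIV. \<Sum>y\<in>UNIV.
      pmf (\<sigma>X h) x * pmf (\<sigma>Y (map (\<lambda>(x, y). (y, x)) h)) y * F (h @ [(x, y)]))"
  by (simp only: play.simps, subst pmf_expectation_bind[where A = "set_pmf (play \<sigma>X \<sigma>Y t)"])
     (auto simp: finite_set_pmf_play expectation_pair_pmf_finite mult.commute
        integral_measure_pmf_real[OF finite_set_pmf_play])

lemma stage_payoff_eq: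
  fixes \<sigma>X :: "('x::finite, 'y::finite) bstrat"
  shows "stage_payoff \<phi> \<sigma>X \<sigma>Y t =
    measure_pmf.expectation (play \<sigma>X \<sigma>Y t) (\<lambda>h. \<Sum>x\<in>UNIV. \<Sum>y\<in>UNIV.
      pmf (\<sigma>X h) x * pmf (\<sigma>Y (map (\<lambda>(x, y). (y, x)) h)) y * \<phi> x y)"
  unfolding stage_payoff_def expectation_play_Suc
  by (intro integral_cong_AE) (auto simp: AE_measure_pmf_iff length_play nth_append)

lemma autocratic_uminus:
  assumes "autocratic \<phi> \<sigma>X"
  shows "autocratic (\<lambda>x y. - \<phi> x y) \<sigma>X"
  unfolding autocratic_def
proof
  fix \<sigma>Y :: "('b, 'a) bstrat"
  have "(\<lambda>T. - ((\<Sum>t\<le>T. stage_payoff \<phi> \<sigma>X \<sigma>Y t) / real (T + 1))) \<longlonglongrightarrow> - 0"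
    using assms unfolding autocratic_def by (intro tendsto_minus) blast
  moreover have "stage_payoff (\<lambda>x y. - \<phi> x y) \<sigma>X \<sigma>Y t = - stage_payoff \<phi> \<sigma>X \<sigma>Y t" for t
    by (simp add: stage_payoff_def)
  ultimately show
    "(\<lambda>T. (\<Sum>t\<le>T. stage_payoff (\<lambda>x y. - \<phi> x y) \<sigma>X \<sigma>Y t) / real (T + 1)) \<longlonglongrightarrow> 0"
    by (simp add: sum_negf)
qed

lemma autocratic_imp_nonneg_guarantee:
  fixes \<phi> :: "'x::finite \<Rightarrow> 'y::finite \<Rightarrow> real" and \<sigma>X :: "('x, 'y) bstrat"
  assumes "autocratic \<phi> \<sigma>X"
  shows "\<exists>\<tau>::'x pmf. \<forall>y. 0 \<le> (\<Sum>x\<in>UNIV. pmf \<tau> x * \<phi> x y)"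
proof (rule ccontr)
  assume "\<not> ?thesis"
  then obtain \<rho> :: "'y pmf" where \<rho>: "\<forall>x. (\<Sum>y\<in>UNIV. pmf \<rho> y * \<phi> x y) < 0"
    using counter_strategy_if_no_guarantee[of \<phi>] by (auto simp: not_le)
  define m where "m = Max (range (\<lambda>x. \<Sum>y\<in>UNIV. pmf \<rho> y * \<phi> x y))"
  have "m < 0"
    unfolding m_def using \<rho> by (subst Max_less_iff) auto
  have row_le: "(\<Sum>y\<in>UNIV. pmf \<rho> y * \<phi> x y) \<le> m" for x
    unfolding m_def by (rule Max_ge) auto
  define \<sigma>Y :: "('y, 'x) bstrat" where "\<sigma>Y = (\<lambda>_. \<rho>)"
  have stage_le: "stage_payoff \<phi> \<sigma>X \<sigma>Y t \<le> m" for t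
  proof -
    have "(\<Sum>x\<in>UNIV. \<Sum>y\<in>UNIV. pmf (\<sigma>X h) x * pmf \<rho> y * \<phi> x y) \<le> m" for h
    proof -
      have "(\<Sum>x\<in>UNIV. \<Sum>y\<in>UNIV. pmf (\<sigma>X h) x * pmf \<rho> y * \<phi> x y)
          = (\<Sum>x\<in>UNIV. pmf (\<sigma>X h) x * (\<Sum>y\<in>UNIV. pmf \<rho> y * \<phi> x y))"
        by (simp add: sum_distrib_left mult.assoc)
      also have "\<dots> \<le> (\<Sum>x\<in>UNIV. pmf (\<sigma>X h) x * m)"
        by (intro sum_mono mult_left_mono row_le) simp
      also have "\<dots> = m"
        by (simp add: sum_distrib_right[symmetric] sum_pmf_eq_1)
      finally show ?thesis .
    qed
    then show ?thesis
      unfolding stage_payoff_eq \<sigma>Y_def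
      by (intro measure_pmf.integral_le_const integrable_measure_pmf_finite finite_set_pmf_play) auto
  qed
  have "(\<lambda>T. (\<Sum>t\<le>T. stage_payoff \<phi> \<sigma>X \<sigma>Y t) / real (T + 1)) \<longlonglongrightarrow> 0"
    using assms unfolding autocratic_def by blast
  moreover have "(\<Sum>t\<le>T. stage_payoff \<phi> \<sigma>X \<sigma>Y t) / real (T + 1) \<le> m" for T
    using sum_mono[of "{..T}" "stage_payoff \<phi> \<sigma>X \<sigma>Y" "\<lambda>_. m"] stage_le
    by (simp add: divide_le_eq algebra_simps)
  ultimately have "0 \<le> m"
    by (intro LIMSEQ_le_const2) auto
  with \<open>m < 0\<close> show False by simp
qed

lemma autocratic_imp_nonpos_guarantee:
  fixes \<phi> :: "'x::finite \<Rightarrow> 'y::finite \<Rightarrow> real" and \<sigma>X :: "('x, 'y) bstrat"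
  assumes "autocratic \<phi> \<sigma>X"
  shows "\<exists>\<tau>::'x pmf. \<forall>y. (\<Sum>x\<in>UNIV. pmf \<tau> x * \<phi> x y) \<le> 0"
  using autocratic_imp_nonneg_guarantee[OF autocratic_uminus[OF assms]]
  by (simp add: sum_negf)

lemma cesaro_telescoping_tendsto_zero:
  fixes Q :: "nat \<Rightarrow> real"
  assumes "\<And>t. \<bar>Q t\<bar> \<le> B"
  shows "(\<lambda>T. (\<Sum>t\<le>T. Q t - Q (Suc t)) / real (T + 1)) \<longlonglongrightarrow> 0"
proof (rule Lim_null_comparison)
  show "(\<lambda>T. 2 * B * inverse (real (Suc T))) \<longlonglongrightarrow> 0"
    by (rule tendsto_mult_right_zero[OF LIMSEQ_inverse_real_of_nat])
  have "\<bar>Q 0 - Q (Suc T)\<bar> \<le> 2 * B" for T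
    using assms[of 0] assms[of "Suc T"] by linarith
  then show "\<forall>\<^sub>F T in sequentially.
      norm ((\<Sum>t\<le>T. Q t - Q (Suc t)) / real (T + 1)) \<le> 2 * B * inverse (real (Suc T))"
    by (intro always_eventually allI) (simp add: sum_telescope divide_inverse abs_mult)
qed

lemma autocratic_if_potential:
  fixes \<phi> :: "'x::finite \<Rightarrow> 'y::finite \<Rightarrow> real" and \<sigma>X :: "('x, 'y) bstrat"
    and V :: "('x, 'y) hist \<Rightarrow> real"
  assumes "\<eta> > 0" and bounded: "\<And>h. \<bar>V h\<bar> \<le> B"
    and drift: "\<And>h y. (\<Sum>x\<in>UNIV. pmf (\<sigma>X h) x * V (h @ [(x, y)]))
                    = V h - \<eta> * (\<Sum>x\<in>UNIV. pmf (\<sigma>X h) x * \<phi> x y)"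
  shows "autocratic \<phi> \<sigma>X"
  unfolding autocratic_def
proof
  fix \<sigma>Y :: "('y, 'x) bstrat"
  define Q where "Q t = measure_pmf.expectation (play \<sigma>X \<sigma>Y t) V" for t
  have integrable: "integrable (measure_pmf (play \<sigma>X \<sigma>Y t)) f" for t and f :: "_ \<Rightarrow> real"
    by (intro integrable_measure_pmf_finite finite_set_pmf_play)
  have "\<bar>Q t\<bar> \<le> B" for t
    unfolding Q_def
    by (rule order.trans[OF integral_abs_bound])
       (intro measure_pmf.integral_le_const integrable; simp add: bounded)
  moreover have "Q t - Q (Suc t) = \<eta> * stage_payoff \<phi> \<sigma>X \<sigma>Y t" for t
  proof -
    have "(\<Sum>x\<in>UNIV. \<Sum>y\<in>UNIV. pmf (\<sigma>X h) x * pmf \<rho> y * V (h @ [(x, y)]))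
        = V h - \<eta> * (\<Sum>x\<in>UNIV. \<Sum>y\<in>UNIV. pmf (\<sigma>X h) x * pmf \<rho> y * \<phi> x y)"
      for h and \<rho> :: "'y pmf"
    proof -
      have total: "(\<Sum>y\<in>UNIV. pmf \<rho> y * c) = c" for c
        by (simp add: sum_distrib_right[symmetric] sum_pmf_eq_1)
      have "(\<Sum>x\<in>UNIV. \<Sum>y\<in>UNIV. pmf (\<sigma>X h) x * pmf \<rho> y * V (h @ [(x, y)]))
          = (\<Sum>y\<in>UNIV. pmf \<rho> y * (\<Sum>x\<in>UNIV. pmf (\<sigma>X h) x * V (h @ [(x, y)])))"
        by (subst sum.swap) (simp add: sum_distrib_left mult_ac)
      also have "\<dots> = (\<Sum>y\<in>UNIV. pmf \<rho> y * V h)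
          - \<eta> * (\<Sum>y\<in>UNIV. pmf \<rho> y * (\<Sum>x\<in>UNIV. pmf (\<sigma>X h) x * \<phi> x y))"
        by (simp add: drift right_diff_distrib sum_subtractf sum_distrib_left mult_ac)
      also have "\<dots> = V h - \<eta> * (\<Sum>x\<in>UNIV. \<Sum>y\<in>UNIV. pmf (\<sigma>X h) x * pmf \<rho> y * \<phi> x y)"
        unfolding total by (subst sum.swap) (simp add: sum_distrib_left mult_ac)
      finally show ?thesis .
    qed
    then show ?thesis
      unfolding Q_def expectation_play_Suc stage_payoff_eq
      by (simp add: integrable)
  qed
  ultimately have "(\<lambda>T. \<eta> * ((\<Sum>t\<le>T. stage_payoff \<phi> \<sigma>X \<sigma>Y t) / real (T + 1))) \<longlonglongrightarrow> \<eta> * 0"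
    using cesaro_telescoping_tendsto_zero[of Q B] by (simp add: sum_distrib_left)
  with \<open>\<eta> > 0\<close> show "(\<lambda>T. (\<Sum>t\<le>T. stage_payoff \<phi> \<sigma>X \<sigma>Y t) / real (T + 1)) \<longlonglongrightarrow> 0"
    by (subst (asm) tendsto_mult_left_iff) auto
qed

lemma ex_step_size:
  fixes a b :: "'y::finite \<Rightarrow> real"
  assumes "\<And>y. 0 \<le> a y" "\<And>y. b y \<le> 0"
  shows "\<exists>\<eta>>0. \<forall>p\<in>{0..1}. \<forall>y. p - \<eta> * (p * a y + (1 - p) * b y) \<in> {0..1}"
proof -
  define K where "K = 1 + (\<Sum>y\<in>UNIV. a y - b y)"
  have nonneg: "b y \<le> a y" for y
    using assms[of y] by simp
  have "a y - b y \<le> (\<Sum>y\<in>UNIV. a y - b y)" for y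
    by (rule member_le_sum) (simp_all add: nonneg)
  then have le_K: "a y \<le> K" "- b y \<le> K" for y
    using assms[of y] unfolding K_def by (smt (verit))+
  have "K > 0"
    using sum_nonneg[of UNIV "\<lambda>y. a y - b y"] nonneg by (simp add: K_def)
  have "p - (p * a y + (1 - p) * b y) / K \<in> {0..1}" if "p \<in> {0..1}" for p y
  proof -
    have "1 - a y / K \<in> {0..1}" "- b y / K \<in> {0..1}"
      using le_K[of y] assms[of y] \<open>K > 0\<close> by (auto simp: field_simps)
    then have "(1 - p) *\<^sub>R (- b y / K) + p *\<^sub>R (1 - a y / K) \<in> {0..1::real}"
      using that by (intro convexD) auto
    then show ?thesis
      by (simp add: algebra_simps diff_divide_distrib add_divide_distrib)
  qed
  with \<open>K > 0\<close> show ?thesis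
    by (intro exI[of _ "1 / K"]) auto
qed

text \<open>The weight p of \<open>\<tau> = mix p \<tau>p \<tau>m\<close> is recovered by choice; it is unique unless
  \<open>\<tau>p = \<tau>m\<close>, and then the result does not depend on it.\<close>

definition two_point_update ::
    "'x pmf \<Rightarrow> 'x pmf \<Rightarrow> (real \<Rightarrow> 'y \<Rightarrow> real) \<Rightarrow> 'x pmf \<Rightarrow> 'y \<Rightarrow> 'x pmf"
  where "two_point_update \<tau>p \<tau>m pstar \<tau> s =
    mix (pstar (SOME p. p \<in> {0..1} \<and> \<tau> = mix p \<tau>p \<tau>m) s) \<tau>p \<tau>m"

lemma two_point_update_mix:
  assumes "p \<in> {0..1}"
  shows "two_point_update \<tau>p \<tau>m pstar (mix p \<tau>p \<tau>m) s = mix (pstar p s) \<tau>p \<tau>m"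
proof (cases "\<tau>p = \<tau>m")
  case True
  then show ?thesis by (simp add: two_point_update_def mix_self)
next
  case False
  then have "(SOME q. q \<in> {0..1} \<and> mix p \<tau>p \<tau>m = mix q \<tau>p \<tau>m) = p"
    using assms by (intro some_equality) (auto simp: mix_inject)
  then show ?thesis by (simp add: two_point_update_def)
qed

lemma two_point_two_point_update:
  assumes "p0 \<in> {0..1}" and "\<And>p s. p \<in> {0..1} \<Longrightarrow> pstar p s \<in> {0..1}"
  shows "two_point (mix p0 \<tau>p \<tau>m) (two_point_update \<tau>p \<tau>m pstar)"
  unfolding two_point_def
proof (intro exI conjI)
  show "p0 \<in> {0..1}" by (rule assms(1))
  show "\<forall>p\<in>{0..1}. \<forall>s. pstar p s \<in> {0..1}"
    using assms(2) by blast
  show "mix p0 \<tau>p \<tau>m = mix p0 \<tau>p \<tau>m" ..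
  show "\<forall>p\<in>{0..1}. \<forall>s.
      two_point_update \<tau>p \<tau>m pstar (mix p \<tau>p \<tau>m) s = mix (pstar p s) \<tau>p \<tau>m"
    by (simp add: two_point_update_mix)
qed

lemma reactive_strategy_two_point_update:
  assumes "p0 \<in> {0..1}" and pstar: "\<And>p s. p \<in> {0..1} \<Longrightarrow> pstar p s \<in> {0..1}"
  shows "reactive_strategy (mix p0 \<tau>p \<tau>m) (two_point_update \<tau>p \<tau>m pstar) h
           = mix (foldl (\<lambda>p a. pstar p (snd a)) p0 h) \<tau>p \<tau>m
         \<and> foldl (\<lambda>p a. pstar p (snd a)) p0 h \<in> {0..1}"
  using assms(1) unfolding reactive_strategy_def
proof (induction h arbitrary: p0)
  case (Cons a h)
  then show ?case
    using Cons.IH[OF pstar[OF Cons.prems]] by (simp add: two_point_update_mix)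
qed simp

lemma autocratic_two_point_update:
  fixes \<phi> :: "'x::finite \<Rightarrow> 'y::finite \<Rightarrow> real"
  assumes "\<eta> > 0" and "p0 \<in> {0..1}"
    and "\<And>p y. p \<in> {0..1} \<Longrightarrow>
      p - \<eta> * (\<Sum>x\<in>UNIV. pmf (mix p \<tau>p \<tau>m) x * \<phi> x y) \<in> {0..1}"
  shows "autocratic \<phi> (reactive_strategy (mix p0 \<tau>p \<tau>m)
           (two_point_update \<tau>p \<tau>m (\<lambda>p y. p - \<eta> * (\<Sum>x\<in>UNIV. pmf (mix p \<tau>p \<tau>m) x * \<phi> x y))))"
    (is "autocratic \<phi> ?\<sigma>X")
proof -
  define pstar where "pstar p y = p - \<eta> * (\<Sum>x\<in>UNIV. pmf (mix p \<tau>p \<tau>m) x * \<phi> x y)" for p y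
  define V where "V h = foldl (\<lambda>p a. pstar p (snd a)) p0 h" for h :: "('x \<times> 'y) list"
  have "?\<sigma>X h = mix (V h) \<tau>p \<tau>m \<and> V h \<in> {0..1}" for h
    unfolding V_def pstar_def
    by (rule reactive_strategy_two_point_update) (use assms in auto)
  then have strategy: "?\<sigma>X h = mix (V h) \<tau>p \<tau>m" and V: "V h \<in> {0..1}" for h
    by simp_all
  show ?thesis
  proof (rule autocratic_if_potential[where V = V and B = 1, OF \<open>\<eta> > 0\<close>])
    show "\<bar>V h\<bar> \<le> 1" for h
      using V[of h] by auto
    show "(\<Sum>x\<in>UNIV. pmf (?\<sigma>X h) x * V (h @ [(x, y)]))
        = V h - \<eta> * (\<Sum>x\<in>UNIV. pmf (?\<sigma>X h) x * \<phi> x y)" for h y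
    proof -
      have "V (h @ [(x, y)]) = pstar (V h) y" for x
        by (simp add: V_def)
      then show ?thesis
        unfolding strategy by (simp add: sum_distrib_right[symmetric] sum_pmf_eq_1 pstar_def)
    qed
  qed
qed

theorem theorem3:
  fixes \<phi> :: "'x::finite \<Rightarrow> 'y::finite \<Rightarrow> real"
    and \<sigma>X :: "('x, 'y) bstrat"
  assumes "autocratic \<phi> \<sigma>X"
  shows "\<exists>\<sigma>0 (\<sigma>s :: 'x pmf \<Rightarrow> 'y \<Rightarrow> 'x pmf).
           two_point \<sigma>0 \<sigma>s \<and> autocratic \<phi> (reactive_strategy \<sigma>0 \<sigma>s)"
proof -
  obtain \<tau>p where \<tau>p: "\<forall>y. 0 \<le> (\<Sum>x\<in>UNIV. pmf \<tau>p x * \<phi> x y)"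
    using autocratic_imp_nonneg_guarantee[OF assms] ..
  obtain \<tau>m where \<tau>m: "\<forall>y. (\<Sum>x\<in>UNIV. pmf \<tau>m x * \<phi> x y) \<le> 0"
    using autocratic_imp_nonpos_guarantee[OF assms] ..
  define a where "a y = (\<Sum>x\<in>UNIV. pmf \<tau>p x * \<phi> x y)" for y
  define b where "b y = (\<Sum>x\<in>UNIV. pmf \<tau>m x * \<phi> x y)" for y
  obtain \<eta> where "\<eta> > 0" and step: "\<forall>p\<in>{0..1}. \<forall>y. p - \<eta> * (p * a y + (1 - p) * b y) \<in> {0..1}"
    using ex_step_size[of a b] \<tau>p \<tau>m by (auto simp: a_def b_def)
  let ?pstar = "\<lambda>p y. p - \<eta> * (\<Sum>x\<in>UNIV. pmf (mix p \<tau>p \<tau>m) x * \<phi> x y)"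
  have pstar: "?pstar p y \<in> {0..1}" if "p \<in> {0..1}" for p y
    using step that by (simp add: sum_pmf_mix a_def b_def)
  have "two_point (mix 0 \<tau>p \<tau>m) (two_point_update \<tau>p \<tau>m ?pstar)"
    by (rule two_point_two_point_update[OF _ pstar]) simp_all
  moreover have "autocratic \<phi> (reactive_strategy (mix 0 \<tau>p \<tau>m) (two_point_update \<tau>p \<tau>m ?pstar))"
    by (rule autocratic_two_point_update[OF \<open>\<eta> > 0\<close> _ pstar]) simp_all
  ultimately show ?thesis by blast
qed

end
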